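(* The free semigroup $\{a,b\}^+$ on two generators is neither left fairly amenable nor right fairly amenable.
   Context: For a semigroup $U$, $s\in U$, $A\subseteq U$: $s$ acts injectively on the left (right) of $A$ if $x\mapsto sx$ ($x\mapsto xs$) is injective on $A$. A finitely-additive probability measure on $U$ is $\mu:\mathcal P(U)\to[0,1]$ with $\mu(U)=1$, additive on disjoint sets; it is left fairly invariant if $\mu(sA)=\mu(A)$ whenever $s$ acts injectively on the left of $A$ (right fairly invariant analogously with $As$). $U$ is left (right) fairly amenable if such a measure exists. *)

theory Defs
  imports Complex_Main
begin

definition semigroup_on :: "'a set \<Rightarrow> ('a \<Rightarrow> 'a \<Rightarrow> 'a) \<Rightarrow> bool" where
  "semigroup_on U mult \<longleftrightarrow>
     (\<forall>x\<in>U. \<forall>y\<in>U. mult x y \<in> U) \<and>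
     (\<forall>x\<in>U. \<forall>y\<in>U. \<forall>z\<in>U. mult (mult x y) z = mult x (mult y z))"

definition fa_prob_measure :: "'a set \<Rightarrow> ('a set \<Rightarrow> real) \<Rightarrow> bool" where
  "fa_prob_measure U \<mu> \<longleftrightarrow>
     (\<forall>A. A \<subseteq> U \<longrightarrow> 0 \<le> \<mu> A \<and> \<mu> A \<le> 1) \<and>
     \<mu> U = 1 \<and>
     (\<forall>A B. A \<subseteq> U \<longrightarrow> B \<subseteq> U \<longrightarrow> A \<inter> B = {} \<longrightarrow> \<mu> (A \<union> B) = \<mu> A + \<mu> B)"

definition left_fairly_invariant ::
  "'a set \<Rightarrow> ('a \<Rightarrow> 'a \<Rightarrow> 'a) \<Rightarrow> ('a set \<Rightarrow> real) \<Rightarrow> bool" where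
  "left_fairly_invariant U mult \<mu> \<longleftrightarrow>
     (\<forall>s\<in>U. \<forall>A. A \<subseteq> U \<longrightarrow> inj_on (\<lambda>x. mult s x) A \<longrightarrow>
        \<mu> ((\<lambda>x. mult s x) ` A) = \<mu> A)"

definition right_fairly_invariant ::
  "'a set \<Rightarrow> ('a \<Rightarrow> 'a \<Rightarrow> 'a) \<Rightarrow> ('a set \<Rightarrow> real) \<Rightarrow> bool" where
  "right_fairly_invariant U mult \<mu> \<longleftrightarrow>
     (\<forall>s\<in>U. \<forall>A. A \<subseteq> U \<longrightarrow> inj_on (\<lambda>x. mult x s) A \<longrightarrow>
        \<mu> ((\<lambda>x. mult x s) ` A) = \<mu> A)"

definition left_fairly_amenable :: "'a set \<Rightarrow> ('a \<Rightarrow> 'a \<Rightarrow> 'a) \<Rightarrow> bool" where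
  "left_fairly_amenable U mult \<longleftrightarrow>
     (\<exists>\<mu>. fa_prob_measure U \<mu> \<and> left_fairly_invariant U mult \<mu>)"

definition right_fairly_amenable :: "'a set \<Rightarrow> ('a \<Rightarrow> 'a \<Rightarrow> 'a) \<Rightarrow> bool" where
  "right_fairly_amenable U mult \<longleftrightarrow>
     (\<exists>\<mu>. fa_prob_measure U \<mu> \<and> right_fairly_invariant U mult \<mu>)"

text \<open>The free semigroup on two generators {a,b}: nonempty words over bool
  (False = a, True = b) under concatenation.\<close>

definition free_sg2 :: "bool list set" where
  "free_sg2 = {w. w \<noteq> []}"

lemma semigroup_free_sg2: "semigroup_on free_sg2 (@)"
  by (auto simp: semigroup_on_def free_sg2_def)

end

theory Submission
  imports Defs
begin

text \<open>If \<open>sU\<close> and \<open>tU\<close> are disjoint and both translations are injective on \<open>U\<close>, a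
  fairly invariant measure gives each of \<open>sU\<close>, \<open>tU\<close> the mass \<open>\<mu> U = 1\<close>, so their
  union inside \<open>U\<close> would have mass 2. In \<open>{a,b}\<^sup>+\<close> the generators \<open>a\<close> and \<open>b\<close> are such
  elements on either side.\<close>

lemma fa_prob_measure_no_disjoint_full_sets:
  assumes "fa_prob_measure U \<mu>" "A \<subseteq> U" "B \<subseteq> U" "A \<inter> B = {}" "\<mu> A = 1" "\<mu> B = 1"
  shows False
proof -
  have "\<mu> (A \<union> B) = 2" using assms unfolding fa_prob_measure_def by simp
  moreover have "\<mu> (A \<union> B) \<le> 1"
    using assms(1-3) unfolding fa_prob_measure_def by (meson le_sup_iff)
  ultimately show False by simp
qed

lemma not_left_fairly_amenable_if_disjoint_translates:
  assumes closed: "\<forall>x\<in>U. \<forall>y\<in>U. mult x y \<in> U"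
    and "s \<in> U" "t \<in> U" "inj_on (mult s) U" "inj_on (mult t) U"
    and disjoint: "mult s ` U \<inter> mult t ` U = {}"
  shows "\<not> left_fairly_amenable U mult"
proof
  assume "left_fairly_amenable U mult"
  then obtain \<mu> where \<mu>: "fa_prob_measure U \<mu>" and inv: "left_fairly_invariant U mult \<mu>"
    unfolding left_fairly_amenable_def by blast
  have "\<mu> (mult s ` U) = \<mu> U" "\<mu> (mult t ` U) = \<mu> U"
    using inv assms(2-5) unfolding left_fairly_invariant_def by auto
  moreover have "\<mu> U = 1" using \<mu> unfolding fa_prob_measure_def by blast
  moreover have "mult s ` U \<subseteq> U" "mult t ` U \<subseteq> U" using closed assms(2,3) by auto
  ultimately show False
    using fa_prob_measure_no_disjoint_full_sets[OF \<mu> _ _ disjoint] by simp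
qed

lemma right_fairly_amenable_iff_left_opposite:
  "right_fairly_amenable U mult \<longleftrightarrow> left_fairly_amenable U (\<lambda>x y. mult y x)"
  by (simp add: right_fairly_amenable_def left_fairly_amenable_def
      right_fairly_invariant_def left_fairly_invariant_def)

lemma not_left_fairly_amenable_free_sg2: "\<not> left_fairly_amenable free_sg2 (@)"
  by (rule not_left_fairly_amenable_if_disjoint_translates[where s = "[False]" and t = "[True]"])
    (auto simp: free_sg2_def inj_on_def)

lemma not_right_fairly_amenable_free_sg2: "\<not> right_fairly_amenable free_sg2 (@)"
  unfolding right_fairly_amenable_iff_left_opposite
  by (rule not_left_fairly_amenable_if_disjoint_translates[where s = "[False]" and t = "[True]"])
    (auto simp: free_sg2_def inj_on_def)

theorem mainTheorem19:
  shows "\<not> left_fairly_amenable free_sg2 (@) \<and> \<not> right_fairly_amenable free_sg2 (@)"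
  using not_left_fairly_amenable_free_sg2 not_right_fairly_amenable_free_sg2 by blast

end
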